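(* Under Assumption A with $T>0$, let $\bar\alpha\in(\alpha_\nu-1/T,+\infty)$ be any solution of the fixed point equation $\alpha=\alpha_\nu-\frac1T+\frac{G(\alpha,2)}{2T^2}$. Then $$\frac{\alpha_\nu}{2}-\frac1T-\frac{L}{2T^2\alpha_\nu\beta_\mu}+\frac12\sqrt{\Big(\alpha_\nu+\frac{L}{T^2\beta_\mu\alpha_\nu}\Big)^2+\frac{4\alpha_\nu}{T^2\beta_\mu}}\;\le\;\bar\alpha\;\le\;\frac{\alpha_\nu}{2}-\frac1T+\frac12\sqrt{\alpha_\nu^2+\frac{4\alpha_\nu}{T^2\beta_\mu}}.$$
   Context: For $L>0$ let $f_L(r)=2L^{1/2}\tanh(rL^{1/2}/2)$ for $r\ge0$. For a differentiable $U:\mathbb{R}^d\to\mathbb{R}$ and $r>0$ let $\kappa_U(r)=\inf\{|x-y|^{-2}\langle\nabla U(x)-\nabla U(y),x-y\rangle:|x-y|=r\}$. Assumption A: $\mu(\mathrm{d}x)=e^{-U^\mu(x)}\mathrm{d}x$, $\nu(\mathrm{d}y)=e^{-U^\nu(y)}\mathrm{d}y$ probability measures on $\mathbb{R}^d$, $U^\mu,U^\nu\in C^2$; $\mu$ has finite second moment and finite entropy w.r.t. Lebesgue, and $\langle v,\nabla^2U^\mu(x)v\rangle\le\beta_\mu|v|^2$ for all $x,v$ with $\beta_\mu>0$; and there exist $\alpha_\nu>0,L>0$ with $\kappa_{U^\nu}(r)\ge\alpha_\nu-r^{-1}f_L(r)$ for all $r>0$. For $\alpha\ge\alpha_\nu-1/T$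 define $F(\alpha,s)=\beta_\mu s+\frac{s}{T(1+T\alpha)}+\frac{s^{1/2}f_L(s^{1/2})}{(1+T\alpha)^2}$ for $s>0$, and $G(\alpha,u)=\inf\{s\ge0:F(\alpha,s)\ge u\}$ for $u>0$. *)

theory Defs
  imports "HOL-Analysis.Analysis" "HOL-Probability.Probability"
begin

definition fL :: "real \<Rightarrow> real \<Rightarrow> real" where
  "fL L r = 2 * sqrt L * tanh (r * sqrt L / 2)"

text \<open>kappa_U(r), with gradient gU of U; infimum taken in the extended reals
  so that it is the true infimum (possibly -infinity).\<close>
definition kappa :: "('a::euclidean_space \<Rightarrow> 'a) \<Rightarrow> real \<Rightarrow> ereal" where
  "kappa gU r = Inf {ereal (((gU x - gU y) \<bullet> (x - y)) / (norm (x - y))\<^sup>2) | x y. norm (x - y) = r}"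

definition Ffun :: "real \<Rightarrow> real \<Rightarrow> real \<Rightarrow> real \<Rightarrow> real \<Rightarrow> real" where
  "Ffun beta_mu T L \<alpha> s = beta_mu * s + s / (T * (1 + T * \<alpha>))
      + sqrt s * fL L (sqrt s) / (1 + T * \<alpha>)\<^sup>2"

definition Gfun :: "real \<Rightarrow> real \<Rightarrow> real \<Rightarrow> real \<Rightarrow> real \<Rightarrow> real" where
  "Gfun beta_mu T L \<alpha> u = Inf {s. s \<ge> 0 \<and> Ffun beta_mu T L \<alpha> s \<ge> u}"

definition C2_with :: "('a::euclidean_space \<Rightarrow> real) \<Rightarrow> ('a \<Rightarrow> 'a) \<Rightarrow> ('a \<Rightarrow> 'a \<Rightarrow>\<^sub>L 'a) \<Rightarrow> bool" where
  "C2_with U gU H \<longleftrightarrow>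
     (\<forall>x. (U has_derivative (\<lambda>h. gU x \<bullet> h)) (at x)) \<and>
     (\<forall>x. (gU has_derivative blinfun_apply (H x)) (at x)) \<and>
     continuous_on UNIV H"

end

theory Submission imports Defs begin

text \<open>Only the fixed point equation enters: writing \<open>x = \<alpha> + 1/T\<close>, so that \<open>1 + T\<alpha> = Tx\<close>,
  the bounds \<open>0 \<le> r f\<^sub>L(r) \<le> L r\<^sup>2\<close> (from \<open>tanh y \<le> y\<close>) squeeze \<open>F(\<alpha>,\<cdot>)\<close> between two linear
  functions, hence \<open>G(\<alpha>,2)\<close> between \<open>2/(\<beta>\<^sub>\<mu> + 1/(T\<^sup>2x) + L/(T\<^sup>2x\<^sup>2))\<close> and \<open>2/(\<beta>\<^sub>\<mu> + 1/(T\<^sup>2x))\<close>.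
  Inserted into \<open>x - \<alpha>\<^sub>\<nu> = G(\<alpha>,2)/(2T\<^sup>2)\<close> these give two quadratic inequalities in \<open>x\<close>,
  whose roots are the two bounds.\<close>

lemma tanh_le_self: "(y::real) \<ge> 0 \<Longrightarrow> tanh y \<le> y"
proof -
  assume y: "y \<ge> 0"
  have "(\<lambda>x. x - tanh x) 0 \<le> (\<lambda>x. x - tanh x) y"
  proof (rule DERIV_nonneg_imp_increasing_open[OF y])
    fix x :: real
    show "\<exists>d. ((\<lambda>x. x - tanh x) has_real_derivative d) (at x) \<and> d \<ge> 0"
      by (rule exI[of _ "1 - (1 - tanh x ^ 2)"]) (auto intro!: derivative_eq_intros)
    show "continuous_on {0..y} (\<lambda>x. x - tanh x)"
      by (intro continuous_intros) auto
  qed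
  then show ?thesis by simp
qed

lemma mult_fL_nonneg: "L > 0 \<Longrightarrow> r \<ge> 0 \<Longrightarrow> 0 \<le> r * fL L r"
  unfolding fL_def by simp

lemma mult_fL_le: assumes "L > 0" "r \<ge> 0" shows "r * fL L r \<le> L * r\<^sup>2"
proof -
  have "r * fL L r \<le> r * (2 * sqrt L * (r * sqrt L / 2))"
    unfolding fL_def using assms tanh_le_self[of "r * sqrt L / 2"] by (intro mult_left_mono) auto
  also have "\<dots> = L * r\<^sup>2" using assms by (simp add: power2_eq_square)
  finally show ?thesis .
qed

lemma Ffun_ge_linear:
  assumes "L > 0" "1 + T * \<alpha> \<noteq> 0" "s \<ge> 0"
  shows "(beta_mu + 1 / (T * (1 + T * \<alpha>))) * s \<le> Ffun beta_mu T L \<alpha> s"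
  using mult_fL_nonneg[of L "sqrt s"] assms unfolding Ffun_def by (simp add: algebra_simps)

lemma Ffun_le_linear:
  assumes "L > 0" "1 + T * \<alpha> \<noteq> 0" "s \<ge> 0"
  shows "Ffun beta_mu T L \<alpha> s \<le> (beta_mu + 1 / (T * (1 + T * \<alpha>)) + L / (1 + T * \<alpha>)\<^sup>2) * s"
proof -
  have "sqrt s * fL L (sqrt s) / (1 + T * \<alpha>)\<^sup>2 \<le> L * s / (1 + T * \<alpha>)\<^sup>2"
    using mult_fL_le[of L "sqrt s"] assms by (simp add: divide_right_mono)
  then show ?thesis unfolding Ffun_def by (simp add: algebra_simps)
qed

lemma Inf_superlevel_between_linear:
  fixes f :: "real \<Rightarrow> real"
  assumes "a > 0" "b > 0" "u \<ge> 0"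
    and lower: "\<And>s. s \<ge> 0 \<Longrightarrow> a * s \<le> f s"
    and upper: "\<And>s. s \<ge> 0 \<Longrightarrow> f s \<le> b * s"
  shows "u / b \<le> Inf {s. s \<ge> 0 \<and> f s \<ge> u}" "Inf {s. s \<ge> 0 \<and> f s \<ge> u} \<le> u / a"
proof -
  have mem: "u / a \<in> {s. s \<ge> 0 \<and> f s \<ge> u}"
    using assms lower[of "u / a"] by simp
  show "Inf {s. s \<ge> 0 \<and> f s \<ge> u} \<le> u / a"
    by (rule cInf_lower[OF mem]) (auto simp: bdd_below_def)
  show "u / b \<le> Inf {s. s \<ge> 0 \<and> f s \<ge> u}"
  proof (rule cInf_greatest)
    fix s assume "s \<in> {s. s \<ge> 0 \<and> f s \<ge> u}"
    then have "u \<le> b * s" using upper[of s] by auto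
    then show "u / b \<le> s" using \<open>b > 0\<close> by (simp add: divide_le_eq mult.commute)
  qed (use mem in auto)
qed

lemma Gfun_bounds:
  assumes "beta_mu > 0" "T > 0" "L > 0" "1 + T * \<alpha> > 0" "u \<ge> 0"
  shows "u / (beta_mu + 1 / (T * (1 + T * \<alpha>)) + L / (1 + T * \<alpha>)\<^sup>2) \<le> Gfun beta_mu T L \<alpha> u"
    and "Gfun beta_mu T L \<alpha> u \<le> u / (beta_mu + 1 / (T * (1 + T * \<alpha>)))"
  using Inf_superlevel_between_linear[where f = "Ffun beta_mu T L \<alpha>",
      OF _ _ _ Ffun_ge_linear Ffun_le_linear] assms
  unfolding Gfun_def by (simp_all add: add_pos_pos)

lemma Gfun_2_shifted_bounds:
  assumes "beta_mu > 0" "T > 0" "L > 0" "x > 0"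
  shows "x\<^sup>2 / (T\<^sup>2 * beta_mu * x\<^sup>2 + x + L) \<le> Gfun beta_mu T L (x - 1 / T) 2 / (2 * T\<^sup>2)"
    and "Gfun beta_mu T L (x - 1 / T) 2 / (2 * T\<^sup>2) \<le> x / (T\<^sup>2 * beta_mu * x + 1)"
proof -
  have c: "1 + T * (x - 1 / T) = T * x" using assms by (simp add: field_simps)
  have "beta_mu + 1 / (T * (T * x)) + L / (T * x)\<^sup>2 = (T\<^sup>2 * beta_mu * x\<^sup>2 + x + L) / (T\<^sup>2 * x\<^sup>2)"
    using assms by (simp add: field_simps power2_eq_square)
  then have lower_eq: "x\<^sup>2 / (T\<^sup>2 * beta_mu * x\<^sup>2 + x + L)
      = 2 / (beta_mu + 1 / (T * (T * x)) + L / (T * x)\<^sup>2) / (2 * T\<^sup>2)"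
    using assms by (simp add: power2_eq_square)
  have "2 / (beta_mu + 1 / (T * (T * x)) + L / (T * x)\<^sup>2) \<le> Gfun beta_mu T L (x - 1 / T) 2"
    using Gfun_bounds(1)[of beta_mu T L "x - 1 / T" 2] assms c by simp
  then show "x\<^sup>2 / (T\<^sup>2 * beta_mu * x\<^sup>2 + x + L) \<le> Gfun beta_mu T L (x - 1 / T) 2 / (2 * T\<^sup>2)"
    unfolding lower_eq by (rule divide_right_mono) simp
  have "beta_mu + 1 / (T * (T * x)) = (T\<^sup>2 * beta_mu * x + 1) / (T\<^sup>2 * x)"
    using assms by (simp add: field_simps power2_eq_square)
  then have upper_eq: "2 / (beta_mu + 1 / (T * (T * x))) / (2 * T\<^sup>2) = x / (T\<^sup>2 * beta_mu * x + 1)"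
    using assms by (simp add: power2_eq_square)
  have "Gfun beta_mu T L (x - 1 / T) 2 \<le> 2 / (beta_mu + 1 / (T * (T * x)))"
    using Gfun_bounds(2)[of beta_mu T L "x - 1 / T" 2] assms c by simp
  then show "Gfun beta_mu T L (x - 1 / T) 2 / (2 * T\<^sup>2) \<le> x / (T\<^sup>2 * beta_mu * x + 1)"
    unfolding upper_eq[symmetric] by (rule divide_right_mono) simp
qed

lemma quadratic_le_zero_imp_le_root:
  fixes x a k :: real
  assumes "k > 0" and "k * x\<^sup>2 - a * k * x - a \<le> 0"
  shows "x \<le> a / 2 + sqrt (a\<^sup>2 + 4 * a / k) / 2"
proof -
  have "(2 * x - a)\<^sup>2 = 4 * (k * x\<^sup>2 - a * k * x - a) / k + a\<^sup>2 + 4 * a / k"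
    using assms by (simp add: field_simps power2_eq_square)
  also have "\<dots> \<le> a\<^sup>2 + 4 * a / k" using assms by (simp add: divide_nonpos_pos)
  finally have "2 * x - a \<le> sqrt (a\<^sup>2 + 4 * a / k)" by (simp add: real_le_rsqrt)
  then show ?thesis by simp
qed

lemma quadratic_ge_zero_imp_root_le:
  fixes x p q :: real
  assumes "x > 0" "q > 0" and "x\<^sup>2 - p * x - q \<ge> 0"
  shows "p / 2 + sqrt (p\<^sup>2 + 4 * q) / 2 \<le> x"
proof -
  have "x * (x - p) \<ge> q" using assms by (simp add: power2_eq_square algebra_simps)
  then have "2 * x - p \<ge> 0" using assms by (smt (verit) mult_pos_neg)
  moreover have "(2 * x - p)\<^sup>2 = 4 * (x\<^sup>2 - p * x - q) + (p\<^sup>2 + 4 * q)"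
    by (simp add: power2_eq_square algebra_simps)
  ultimately have "sqrt (p\<^sup>2 + 4 * q) \<le> 2 * x - p" using assms by (simp add: real_le_lsqrt)
  then show ?thesis by simp
qed

lemma fixed_point_upper_bound:
  fixes x a k :: real
  assumes "k > 0" "x > 0" and "x - a \<le> x / (k * x + 1)"
  shows "x \<le> a / 2 + sqrt (a\<^sup>2 + 4 * a / k) / 2"
proof (rule quadratic_le_zero_imp_le_root[OF \<open>k > 0\<close>])
  have "k * x + 1 > 0" using assms by (simp add: add_pos_pos)
  then have "(x - a) * (k * x + 1) \<le> x" using assms by (simp add: le_divide_eq)
  then show "k * x\<^sup>2 - a * k * x - a \<le> 0" by (simp add: algebra_simps power2_eq_square)
qed

lemma fixed_point_lower_bound:
  fixes x a k L :: real
  assumes "k > 0" "a > 0" "L > 0" "x > a" and "x\<^sup>2 / (k * x\<^sup>2 + x + L) \<le> x - a"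
  shows "a / 2 - L / (2 * k * a) + sqrt ((a + L / (k * a))\<^sup>2 + 4 * a / k) / 2 \<le> x"
proof -
  have "k * x\<^sup>2 + x + L > 0" using assms by (simp add: add_pos_pos)
  then have "x\<^sup>2 \<le> (x - a) * (k * x\<^sup>2 + x + L)" using assms by (simp add: divide_le_eq)
  also have "\<dots> \<le> (x - a) * (k * x\<^sup>2 + x + L * x / a)"
    using assms by (intro mult_left_mono) (simp_all add: le_divide_eq)
  also have "\<dots> = x * ((x - a) * (k * x + 1 + L / a))"
    using assms by (simp add: field_simps power2_eq_square)
  finally have "x \<le> (x - a) * (k * x + 1 + L / a)"
    using assms by (simp add: power2_eq_square)
  moreover have "(x - a) * (k * x + 1 + L / a) - x
      = k * (x\<^sup>2 - (a - L / (k * a)) * x - (a + L) / k)"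
    using assms by (simp add: algebra_simps power2_eq_square add_divide_distrib diff_divide_distrib)
  ultimately have "0 \<le> k * (x\<^sup>2 - (a - L / (k * a)) * x - (a + L) / k)"
    by linarith
  then have "x\<^sup>2 - (a - L / (k * a)) * x - (a + L) / k \<ge> 0"
    using assms by (simp add: zero_le_mult_iff)
  from quadratic_ge_zero_imp_root_le[OF _ _ this] assms
  have "(a - L / (k * a)) / 2 + sqrt ((a - L / (k * a))\<^sup>2 + 4 * ((a + L) / k)) / 2 \<le> x"
    by (simp add: add_pos_pos)
  moreover have "(a - L / (k * a))\<^sup>2 + 4 * ((a + L) / k) = (a + L / (k * a))\<^sup>2 + 4 * a / k"
    using assms by (simp add: field_simps power2_eq_square)
  moreover have "(a - L / (k * a)) / 2 = a / 2 - L / (2 * k * a)"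
    by (simp add: field_simps)
  ultimately show ?thesis by simp
qed

theorem mainTheorem2:
  fixes U_mu U_nu :: "'a::euclidean_space \<Rightarrow> real"
    and g_mu g_nu :: "'a \<Rightarrow> 'a"
    and H_mu H_nu :: "'a \<Rightarrow> 'a \<Rightarrow>\<^sub>L 'a"
    and beta_mu alpha_nu L T alphabar :: real
  assumes C2_mu: "C2_with U_mu g_mu H_mu"
    and C2_nu: "C2_with U_nu g_nu H_nu"
    and prob_mu: "prob_space (density lborel (\<lambda>x. ennreal (exp (- U_mu x))))"
    and prob_nu: "prob_space (density lborel (\<lambda>y. ennreal (exp (- U_nu y))))"
    and second_moment_mu: "integrable lborel (\<lambda>x. (norm x)\<^sup>2 * exp (- U_mu x))"
    and entropy_mu: "integrable lborel (\<lambda>x. exp (- U_mu x) * ln (exp (- U_mu x)))"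
    and beta_pos: "beta_mu > 0"
    and hess_bound: "\<And>x v. v \<bullet> blinfun_apply (H_mu x) v \<le> beta_mu * (norm v)\<^sup>2"
    and alpha_pos: "alpha_nu > 0"
    and L_pos: "L > 0"
    and kappa_bound: "\<And>r. r > 0 \<Longrightarrow> kappa g_nu r \<ge> ereal (alpha_nu - fL L r / r)"
    and T_pos: "T > 0"
    and alphabar_dom: "alphabar > alpha_nu - 1 / T"
    and fixed_point: "alphabar = alpha_nu - 1 / T + Gfun beta_mu T L alphabar 2 / (2 * T\<^sup>2)"
  shows "alpha_nu / 2 - 1 / T - L / (2 * T\<^sup>2 * alpha_nu * beta_mu)
           + sqrt ((alpha_nu + L / (T\<^sup>2 * beta_mu * alpha_nu))\<^sup>2 + 4 * alpha_nu / (T\<^sup>2 * beta_mu)) / 2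
         \<le> alphabar
       \<and> alphabar \<le> alpha_nu / 2 - 1 / T + sqrt (alpha_nu\<^sup>2 + 4 * alpha_nu / (T\<^sup>2 * beta_mu)) / 2"
proof -
  define x where "x = alphabar + 1 / T"
  have x_gt: "x > alpha_nu" using alphabar_dom by (simp add: x_def)
  have fixed_point_x: "x - alpha_nu = Gfun beta_mu T L (x - 1 / T) 2 / (2 * T\<^sup>2)"
    using fixed_point by (simp add: x_def)
  note G_bounds = Gfun_2_shifted_bounds[OF beta_pos T_pos L_pos, of x, folded fixed_point_x]
  have k_pos: "T\<^sup>2 * beta_mu > 0" using T_pos beta_pos by simp
  have "x \<le> alpha_nu / 2 + sqrt (alpha_nu\<^sup>2 + 4 * alpha_nu / (T\<^sup>2 * beta_mu)) / 2"
    using fixed_point_upper_bound[OF k_pos] G_bounds(2) x_gt alpha_pos by simp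
  moreover have "alpha_nu / 2 - L / (2 * T\<^sup>2 * alpha_nu * beta_mu)
      + sqrt ((alpha_nu + L / (T\<^sup>2 * beta_mu * alpha_nu))\<^sup>2 + 4 * alpha_nu / (T\<^sup>2 * beta_mu)) / 2 \<le> x"
    using fixed_point_lower_bound[OF k_pos alpha_pos L_pos x_gt] G_bounds(1) x_gt alpha_pos
    by (simp add: ac_simps)
  ultimately show ?thesis unfolding x_def by simp
qed

end
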